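(* Let $G$ be a finite group of order greater than $1$ and let $q$ be the smallest prime divisor of $|G|$. Then ${\rm mf}_{pp}(G)\leq q$ if and only if $\mathcal{F}_{pp}(G)=\{1\}$ or $\mathcal{F}_{pp}(G)=\{1,q\}$.
   Context: All groups are finite. For a group $G$ and a positive integer $n$ dividing $|G|$, let $F_n(G)=\{g\in G\mid g^n=1\}$. By Frobenius' theorem $|F_n(G)|=f_n\cdot n$ for a positive integer $f_n$, called the Frobenius quotient of $G$ for $n$. ${\rm exp}(G)$ denotes the exponent of $G$. A prime-power divisor of ${\rm exp}(G)$ is a positive divisor $n$ of ${\rm exp}(G)$ of the form $n=p^k$ with $p$ prime and $k\geq 0$ (so $n=1$ is included). $\mathcal{F}_{pp}(G)=\{f_n\mid n \text{ is a prime-power divisor of } {\rm exp}(G)\}$ and ${\rm mf}_{pp}(G)$ is the maximum element of $\mathcal{F}_{pp}(G)$. *)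

theory Defs
  imports "HOL-Algebra.Algebra" "HOL-Computational_Algebra.Primes"
begin

definition group_exp :: "('a, 'b) monoid_scheme \<Rightarrow> nat" where
  "group_exp G = Lcm ((group.ord G) ` carrier G)"

definition sol_set :: "('a, 'b) monoid_scheme \<Rightarrow> nat \<Rightarrow> 'a set" where
  "sol_set G n = {g \<in> carrier G. g [^]\<^bsub>G\<^esub> n = \<one>\<^bsub>G\<^esub>}"

text \<open>Frobenius quotient f_n = |F_n(G)| / n (an integer when n divides |G|).\<close>
definition frob_quot :: "('a, 'b) monoid_scheme \<Rightarrow> nat \<Rightarrow> nat" where
  "frob_quot G n = card (sol_set G n) div n"

definition pp_divisors :: "('a, 'b) monoid_scheme \<Rightarrow> nat set" where
  "pp_divisors G = {n. n dvd group_exp G \<and> (\<exists>p k. Factorial_Ring.prime p \<and> n = p ^ k)}"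

definition F_pp :: "('a, 'b) monoid_scheme \<Rightarrow> nat set" where
  "F_pp G = frob_quot G ` pp_divisors G"

definition mf_pp :: "('a, 'b) monoid_scheme \<Rightarrow> nat" where
  "mf_pp G = Max (F_pp G)"

end

theory Submission
  imports Defs "HOL-Number_Theory.Totient"
begin

(* Let n = p^k divide exp(G) and pick g of order n, so that <g> is contained in F_n. If
   F_n = <g> then f_n = 1. Otherwise take x in F_n outside <g>; we show |F_n| >= p n.
   If x normalizes <g>, say x g x^-1 = g^c, then c^n = 1 (mod n), which forces
   n | 1 + c + ... + c^(n-1); hence the p n distinct products g^i x^j (i < n, j < p) lie in F_n.
   Otherwise h = x g x^-1 lies outside <g>. If g normalizes <h>, the same argument applies to
   h and g. If not, the conjugates g^i h g^-i (i < p) generate p distinct cyclic subgroups of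
   order n, all different from <g>; their generators together with <g> make
   n + p phi(n) = p n elements of F_n. So every f_n is 1 or at least p >= q, and f_1 = 1. *)

lemma sum_power_lessThan_mult:
  fixes c :: "'a::comm_semiring_1"
  shows "(\<Sum>t<m * r. c ^ t) = (\<Sum>t<m. c ^ t) * (\<Sum>s<r. (c ^ m) ^ s)"
proof -
  have block: "(\<Sum>t\<in>{s * m..<s * m + m}. c ^ t) = (\<Sum>t<m. c ^ t) * (c ^ m) ^ s" for s
  proof -
    have "(\<Sum>t\<in>{s * m..<s * m + m}. c ^ t) = (\<Sum>t<m. c ^ (t + s * m))"
      using sum.shift_bounds_nat_ivl[of "\<lambda>t. c ^ t" 0 "s * m" m]
      by (simp add: add.commute atLeast0LessThan)
    then show ?thesis
      by (simp add: power_add sum_distrib_right power_mult mult.commute[of s m])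
  qed
  have "(\<Sum>t<m * r. c ^ t) = (\<Sum>s<r. (\<Sum>t<m. c ^ t) * (c ^ m) ^ s)"
    using sum.nat_group[of "\<lambda>t. c ^ t" m r] by (simp add: block mult.commute[of m r])
  then show ?thesis
    by (simp only: sum_distrib_left)
qed

lemma prime_power_dvd_geometric_sum_if_cong_1:
  fixes c :: int
  assumes "Factorial_Ring.prime p" and "[c = 1] (mod int p)"
  shows "int p ^ k dvd (\<Sum>t<p ^ k. c ^ t)"
proof (induction k)
  case (Suc k)
  have "[(\<Sum>s<p. (c ^ p ^ k) ^ s) = (\<Sum>s<p. 1)] (mod int p)"
    using assms(2) by (intro cong_sum) (metis cong_pow power_one)
  then have "int p dvd (\<Sum>s<p. (c ^ p ^ k) ^ s)"
    by (simp add: cong_dvd_iff)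
  moreover have "(\<Sum>t<p ^ Suc k. c ^ t) = (\<Sum>t<p ^ k. c ^ t) * (\<Sum>s<p. (c ^ p ^ k) ^ s)"
    by (metis power_Suc2 sum_power_lessThan_mult)
  ultimately show ?case
    using Suc by (metis mult_dvd_mono power_Suc2)
qed simp

lemma prime_power_dvd_geometric_sum:
  fixes c :: int
  assumes p: "Factorial_Ring.prime p" and "k > 0" and c: "[c ^ p ^ k = 1] (mod int p ^ k)"
  shows "int p ^ k dvd (\<Sum>t<p ^ k. c ^ t)"
proof (cases "[c = 1] (mod int p)")
  case True
  then show ?thesis
    using prime_power_dvd_geometric_sum_if_cong_1[OF p] by blast
next
  case False
  \<comment> \<open>\<open>c - 1\<close> is a unit modulo \<open>p ^ k\<close> and divides \<open>c ^ p ^ k - 1\<close> with quotient the sum\<close>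
  then have "coprime (int p) (c - 1)"
    using p by (simp add: prime_imp_coprime cong_iff_dvd_diff)
  then have "coprime (int p ^ k) (c - 1)"
    by simp
  moreover have "int p ^ k dvd (c - 1) * (\<Sum>t<p ^ k. c ^ t)"
    using c by (simp flip: power_diff_1_eq add: cong_iff_dvd_diff)
  ultimately show ?thesis
    using coprime_dvd_mult_right_iff by blast
qed

lemma coprime_prime_power_if_less:
  fixes p d :: nat
  assumes "Factorial_Ring.prime p" "0 < d" "d < p"
  shows "coprime d (p ^ k)"
proof -
  have "\<not> p dvd d"
    by (rule nat_dvd_not_less[OF assms(2,3)])
  then show ?thesis
    using assms(1) by (simp add: prime_imp_coprime_nat coprime_commute[of d])
qed

lemma prime_power_dvd_lcm_imp:
  fixes a b :: nat
  assumes p: "Factorial_Ring.prime p" and dvd: "p ^ k dvd lcm a b"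
  shows "p ^ k dvd a \<or> p ^ k dvd b"
proof (cases "a = 0 \<or> b = 0")
  case False
  have "\<not> is_unit p"
    using p not_prime_unit by blast
  then show ?thesis
    using dvd False p
    by (simp add: power_dvd_iff_le_multiplicity multiplicity_lcm lcm_eq_0_iff le_max_iff_disj)
qed auto

lemma prime_power_dvd_Lcm_imp:
  fixes A :: "nat set"
  assumes "finite A" and p: "Factorial_Ring.prime p" "k > 0" and "p ^ k dvd Lcm A"
  shows "\<exists>a\<in>A. p ^ k dvd a"
  using assms(1,4)
proof (induction A rule: finite_induct)
  case empty
  then show ?case
    using p prime_gt_1_nat[of p] by simp
next
  case (insert a A)
  then show ?case
    using prime_power_dvd_lcm_imp[OF p(1)] by auto
qed

lemma Max_le_gap_iff:
  fixes F :: "nat set"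
  assumes "finite F" "1 \<in> F" "1 < q" "\<And>f. f \<in> F \<Longrightarrow> f = 1 \<or> q \<le> f"
  shows "Max F \<le> q \<longleftrightarrow> F = {1} \<or> F = {1, q}"
proof
  assume max: "Max F \<le> q"
  have "f \<in> {1, q}" if "f \<in> F" for f
    using Max_ge[OF assms(1) that] max assms(4)[OF that] by auto
  then have "F \<subseteq> {1, q}"
    by blast
  then show "F = {1} \<or> F = {1, q}"
    using assms(2) by blast
next
  assume "F = {1} \<or> F = {1, q}"
  then show "Max F \<le> q"
    using assms(3) by auto
qed

context group
begin

lemma pow_eq_pow_iff_cong:
  assumes "x \<in> carrier G"
  shows "x [^] (a::nat) = x [^] (b::nat) \<longleftrightarrow> [a = b] (mod ord x)"
  using int_pow_eq[OF assms, of "int a" "int b"]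
  by (simp add: int_pow_int cong_iff_dvd_diff dvd_diff_commute flip: cong_int_iff)

lemma pow_conj:
  assumes "a \<in> carrier G" "v \<in> carrier G"
  shows "(a \<otimes> v \<otimes> inv a) [^] (t::nat) = a \<otimes> v [^] t \<otimes> inv a"
proof (induction t)
  case (Suc t)
  then show ?case
    using assms by (simp add: m_assoc flip: m_assoc[of "inv a"])
qed (use assms in simp)

lemma conj_eq_conj_iff:
  assumes "a \<in> carrier G" "u \<in> carrier G" "v \<in> carrier G"
  shows "a \<otimes> u \<otimes> inv a = a \<otimes> v \<otimes> inv a \<longleftrightarrow> u = v"
  using assms by simp

lemma ord_conj:
  assumes "a \<in> carrier G" "v \<in> carrier G"
  shows "ord (a \<otimes> v \<otimes> inv a) = ord v"
proof -
  have "a \<otimes> v [^] t \<otimes> inv a = \<one> \<longleftrightarrow> v [^] t = \<one>" for t :: nat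
    using conj_eq_conj_iff[OF assms(1) nat_pow_closed[OF assms(2)] one_closed] assms by simp
  then show ?thesis
    using assms by (simp add: ord_unique pow_conj pow_eq_id)
qed

lemma conj_pow_eq_pow_power:
  assumes "a \<in> carrier G" "y \<in> carrier G" "a \<otimes> y \<otimes> inv a = y [^] (c::nat)"
  shows "a [^] (j::nat) \<otimes> y \<otimes> inv (a [^] j) = y [^] (c ^ j)"
proof (induction j)
  case (Suc j)
  have "a [^] Suc j \<otimes> y \<otimes> inv (a [^] Suc j) = a \<otimes> (a [^] j \<otimes> y \<otimes> inv (a [^] j)) \<otimes> inv a"
    unfolding nat_pow_Suc2[OF assms(1)] using assms by (simp add: inv_mult_group m_assoc)
  also have "\<dots> = a \<otimes> y [^] (c ^ j) \<otimes> inv a"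
    using Suc by simp
  also have "\<dots> = (a \<otimes> y \<otimes> inv a) [^] (c ^ j)"
    by (rule pow_conj[OF assms(1,2), symmetric])
  finally show ?case
    using assms by (simp add: nat_pow_pow)
qed (use assms in simp)

lemma mult_pow_eq_if_conj_eq_pow:
  assumes "z \<in> carrier G" "y \<in> carrier G" "z \<otimes> y \<otimes> inv z = y [^] (c::nat)"
  shows "(y [^] (i::nat) \<otimes> z) [^] (m::nat) = y [^] (i * (\<Sum>t<m. c ^ t)) \<otimes> z [^] m"
proof (induction m)
  case (Suc m)
  have commute: "z \<otimes> y [^] (l::nat) = y [^] (c * l) \<otimes> z" for l
    using pow_conj[OF assms(1,2), of l] assms by (simp add: nat_pow_pow m_assoc flip: pow_conj)
  have "(y [^] i \<otimes> z) [^] Suc m = (y [^] i \<otimes> z) \<otimes> (y [^] i \<otimes> z) [^] m"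
    using assms by (intro nat_pow_Suc2) simp
  also have "\<dots> = y [^] i \<otimes> (z \<otimes> y [^] (i * (\<Sum>t<m. c ^ t))) \<otimes> z [^] m"
    using Suc assms by (simp add: m_assoc)
  also have "\<dots> = (y [^] i \<otimes> y [^] (c * (i * (\<Sum>t<m. c ^ t)))) \<otimes> (z \<otimes> z [^] m)"
    using assms by (simp add: commute m_assoc)
  also have "\<dots> = y [^] (i + c * (i * (\<Sum>t<m. c ^ t))) \<otimes> z [^] Suc m"
    unfolding nat_pow_Suc2[OF assms(1)] using assms by (simp add: nat_pow_mult)
  also have "i + c * (i * (\<Sum>t<m. c ^ t)) = i * (\<Sum>t<Suc m. c ^ t)"
    by (simp add: sum.lessThan_Suc_shift sum_distrib_left algebra_simps del: sum.lessThan_Suc)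
  finally show ?case .
qed (use assms in simp)

lemma mem_generate_singleton_iff:
  assumes "finite (carrier G)" "a \<in> carrier G"
  shows "u \<in> generate G {a} \<longleftrightarrow> (\<exists>k::nat. u = a [^] k)"
  using generate_pow_on_finite_carrier[OF assms] by auto

lemma generate_singleton_subset:
  assumes "a \<in> carrier G" "u \<in> generate G {a}"
  shows "generate G {u} \<subseteq> generate G {a}"
  using assms by (intro generate_subgroup_incl generate_is_subgroup) auto

lemma generate_singleton_eq_if_ord_eq:
  assumes "finite (carrier G)" "u \<in> carrier G" "w \<in> carrier G"
    and "u \<in> generate G {w}" "ord u = ord w"
  shows "generate G {u} = generate G {w}"
proof (rule card_subset_eq)
  show "finite (generate G {w})"
    using assms(1,3) generate_incl[of "{w}"] finite_subset by blast
  show "generate G {u} \<subseteq> generate G {w}"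
    using assms(3,4) by (rule generate_singleton_subset)
  show "card (generate G {u}) = card (generate G {w})"
    using assms(2,3,5) by (simp flip: generate_pow_card)
qed

lemma generate_pow_coprime:
  assumes "finite (carrier G)" "a \<in> carrier G" "coprime k (ord a)"
  shows "generate G {a [^] (k::nat)} = generate G {a}"
  using assms by (intro generate_singleton_eq_if_ord_eq)
    (auto simp: pow_ord_eq_ord_iff mem_generate_singleton_iff)

lemma generate_singleton_subset_sol_set:
  assumes "finite (carrier G)" "g \<in> carrier G" "ord g dvd n"
  shows "generate G {g} \<subseteq> sol_set G n"
  using assms by (auto simp: sol_set_def mem_generate_singleton_iff nat_pow_pow pow_eq_id)

lemma conj_mem_generate_pow:
  assumes "finite (carrier G)" "a \<in> carrier G" "y \<in> carrier G"
    and "a \<otimes> y \<otimes> inv a \<in> generate G {y}"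
  shows "a [^] (j::nat) \<otimes> y \<otimes> inv (a [^] j) \<in> generate G {y}"
proof -
  obtain c :: nat where "a \<otimes> y \<otimes> inv a = y [^] c"
    using assms by (auto simp: mem_generate_singleton_iff)
  then show ?thesis
    using assms by (auto simp: conj_pow_eq_pow_power mem_generate_singleton_iff)
qed

lemma mem_generate_pow_if_less_prime:
  assumes "finite (carrier G)" "Factorial_Ring.prime p" "a \<in> carrier G" "ord a dvd p ^ k"
    and "0 < d" "d < p"
  shows "a \<in> generate G {a [^] d}"
proof -
  have "coprime d (ord a)"
    using coprime_divisors[OF dvd_refl assms(4) coprime_prime_power_if_less[OF assms(2,5,6)]] .
  then show ?thesis
    using assms(1,3) by (simp add: generate_pow_coprime generate.incl)
qed

lemma mult_mem_sol_set_if_normalizes: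
  assumes fin: "finite (carrier G)" and p: "Factorial_Ring.prime p" and n: "n = p ^ k" "k > 0"
    and y: "y \<in> carrier G" "ord y = n"
    and z: "z \<in> sol_set G n" "z \<otimes> y \<otimes> inv z \<in> generate G {y}"
  shows "y [^] (i::nat) \<otimes> z \<in> sol_set G n"
proof -
  have zc: "z \<in> carrier G" "z [^] n = \<one>"
    using z(1) by (auto simp: sol_set_def)
  obtain c :: nat where c: "z \<otimes> y \<otimes> inv z = y [^] c"
    using z(2) fin y by (auto simp: mem_generate_singleton_iff)
  have "y [^] (c ^ n) = y [^] (1::nat)"
    using conj_pow_eq_pow_power[OF zc(1) y(1) c, of n] zc y by simp
  then have "[int (c ^ n) = int 1] (mod int n)"
    unfolding pow_eq_pow_iff_cong[OF y(1)] y(2) cong_int_iff .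
  then have "[int c ^ p ^ k = 1] (mod int p ^ k)"
    using n by simp
  then have "int n dvd (\<Sum>t<n. int c ^ t)"
    using prime_power_dvd_geometric_sum[OF p n(2)] n by simp
  then have "n dvd (\<Sum>t<n. c ^ t)"
    by (simp flip: int_dvd_int_iff)
  then have "y [^] (i * (\<Sum>t<n. c ^ t)) = \<one>"
    using y by (simp add: pow_eq_id)
  then have "(y [^] i \<otimes> z) [^] n = \<one>"
    using mult_pow_eq_if_conj_eq_pow[OF zc(1) y(1) c] zc y by simp
  then show ?thesis
    using zc y by (simp add: sol_set_def)
qed

lemma inj_on_pow_mult_pow:
  assumes fin: "finite (carrier G)" and y: "y \<in> carrier G" and x: "x \<in> carrier G"
    and not_mem: "\<And>d. 0 < d \<Longrightarrow> d < m \<Longrightarrow> x [^] (d::nat) \<notin> generate G {y}"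
  shows "inj_on (\<lambda>(i, j). y [^] (i::nat) \<otimes> x [^] (j::nat)) ({..<ord y} \<times> {..<m})"
proof -
  have cancel: "i = i' \<and> j = j'"
    if "i < ord y" "i' < ord y" "j \<le> j'" "j' < m" and eq: "y [^] i \<otimes> x [^] j = y [^] i' \<otimes> x [^] j'"
    for i i' j j' :: nat
  proof (cases "j = j'")
    case True
    then have "y [^] i = y [^] i'"
      using eq x y by simp
    then show ?thesis
      using True that y by (simp add: pow_eq_pow_iff_cong cong_def)
  next
    case False
    define d where "d = j' - j"
    have "x [^] j' = x [^] d \<otimes> x [^] j"
      using that x by (simp add: d_def nat_pow_mult)
    then have "y [^] i = y [^] i' \<otimes> x [^] d"
      using eq x y by (simp add: m_assoc[symmetric])
    then have "x [^] d = inv (y [^] i') \<otimes> y [^] i"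
      using x y by (simp add: m_assoc[symmetric])
    moreover have "subgroup (generate G {y}) G"
      using y by (intro generate_is_subgroup) simp
    moreover have "y [^] i \<in> generate G {y}" "y [^] i' \<in> generate G {y}"
      using fin y by (auto simp: mem_generate_singleton_iff)
    ultimately have "x [^] d \<in> generate G {y}"
      by (simp add: subgroup.m_closed subgroup.m_inv_closed)
    moreover have "0 < d" "d < m"
      using False that by (auto simp: d_def)
    ultimately show ?thesis
      using not_mem by blast
  qed
  show ?thesis
  proof (rule inj_onI, clarsimp)
    fix i j i' j' assume "i < ord y" "j < m" "i' < ord y" "j' < m"
      and "y [^] i \<otimes> x [^] j = y [^] i' \<otimes> x [^] j'"
    then show "i = i' \<and> j = j'"
      using cancel[of i i' j j'] cancel[of i' i j' j] by (cases "j \<le> j'") auto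
  qed
qed

lemma prime_mult_le_card_sol_set_normalizing:
  assumes fin: "finite (carrier G)" and p: "Factorial_Ring.prime p" and n: "n = p ^ k" "k > 0"
    and y: "y \<in> carrier G" "ord y = n"
    and x: "x \<in> sol_set G n" "x \<notin> generate G {y}" "x \<otimes> y \<otimes> inv x \<in> generate G {y}"
  shows "p * n \<le> card (sol_set G n)"
proof -
  have xc: "x \<in> carrier G" "ord x dvd p ^ k"
    using x(1) n by (auto simp: sol_set_def pow_eq_id)
  have "x [^] d \<notin> generate G {y}" if "0 < d" "d < p" for d :: nat
    using mem_generate_pow_if_less_prime[OF fin p xc that] generate_singleton_subset[OF y(1)] x(2)
    by blast
  then have inj: "inj_on (\<lambda>(i, j). y [^] (i::nat) \<otimes> x [^] (j::nat)) ({..<n} \<times> {..<p})"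
    using inj_on_pow_mult_pow[OF fin y(1) xc(1)] y(2) by simp
  have "(\<lambda>(i, j). y [^] (i::nat) \<otimes> x [^] (j::nat)) ` ({..<n} \<times> {..<p}) \<subseteq> sol_set G n"
  proof clarify
    fix i j :: nat
    have "x [^] j \<in> sol_set G n"
      using xc x(1) by (auto simp: sol_set_def nat_pow_pow pow_eq_id)
    then show "y [^] i \<otimes> x [^] j \<in> sol_set G n"
      using mult_mem_sol_set_if_normalizes[OF fin p n y] conj_mem_generate_pow[OF fin xc(1) y(1) x(3)]
      by simp
  qed
  then have "card ({..<n} \<times> {..<p}) \<le> card (sol_set G n)"
    using fin inj by (intro card_inj_on_le) (auto simp: sol_set_def)
  then show ?thesis
    by (simp add: card_cartesian_product mult.commute)
qed

definition cyclic_generators :: "'a \<Rightarrow> 'a set" where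
  "cyclic_generators w = (\<lambda>t::nat. w [^] t) ` totatives (ord w)"

lemma ord_mem_cyclic_generators:
  assumes "finite (carrier G)" "w \<in> carrier G" "u \<in> cyclic_generators w"
  shows "ord u = ord w"
  using assms by (auto simp: cyclic_generators_def totatives_def pow_ord_eq_ord_iff)

lemma generate_mem_cyclic_generators:
  assumes "finite (carrier G)" "w \<in> carrier G" "u \<in> cyclic_generators w"
  shows "generate G {u} = generate G {w}"
  using assms by (auto simp: cyclic_generators_def totatives_def generate_pow_coprime)

lemma cyclic_generators_subset_generate:
  assumes "finite (carrier G)" "w \<in> carrier G"
  shows "cyclic_generators w \<subseteq> generate G {w}"
  using assms by (auto simp: cyclic_generators_def mem_generate_singleton_iff)

lemma card_cyclic_generators:
  assumes "w \<in> carrier G"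
  shows "card (cyclic_generators w) = totient (ord w)"
proof -
  have "inj_on (\<lambda>t::nat. w [^] t) (totatives (ord w))"
    using ord_inj'[OF assms] totatives_subset by (force intro: inj_on_subset)
  then show ?thesis
    by (simp add: cyclic_generators_def card_image totient_def)
qed

lemma cyclic_generators_disjoint:
  assumes fin: "finite (carrier G)" and "v \<in> carrier G" "w \<in> carrier G"
    and "generate G {v} \<noteq> generate G {w}"
  shows "cyclic_generators v \<inter> cyclic_generators w = {}"
  using generate_mem_cyclic_generators[OF fin assms(2)] generate_mem_cyclic_generators[OF fin assms(3)]
    assms(4) by blast

lemma generate_inter_cyclic_generators:
  assumes fin: "finite (carrier G)" and g: "g \<in> carrier G" and w: "w \<in> carrier G"
    and "ord w = ord g" "generate G {w} \<noteq> generate G {g}"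
  shows "generate G {g} \<inter> cyclic_generators w = {}"
proof -
  have "generate G {w} = generate G {g}" if u: "u \<in> generate G {g}" "u \<in> cyclic_generators w" for u
  proof -
    have "u \<in> carrier G"
      using u(1) generate_incl[of "{g}"] g by blast
    moreover have "ord u = ord g"
      using ord_mem_cyclic_generators[OF fin w u(2)] assms(4) by simp
    ultimately have "generate G {u} = generate G {g}"
      using generate_singleton_eq_if_ord_eq[OF fin _ g u(1)] by blast
    then show ?thesis
      using generate_mem_cyclic_generators[OF fin w u(2)] by simp
  qed
  then show ?thesis
    using assms(5) by blast
qed

lemma cyclic_generators_subset_sol_set:
  assumes "finite (carrier G)" "w \<in> carrier G" "ord w dvd n"
  shows "cyclic_generators w \<subseteq> sol_set G n"
  using cyclic_generators_subset_generate[OF assms(1,2)] generate_singleton_subset_sol_set[OF assms]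
  by (rule subset_trans)

lemma card_UN_cyclic_generators:
  assumes fin: "finite (carrier G)" and W: "W \<subseteq> carrier G" "\<And>w. w \<in> W \<Longrightarrow> ord w = n"
    and inj: "inj_on (\<lambda>w. generate G {w}) W"
  shows "card (\<Union>w\<in>W. cyclic_generators w) = card W * totient n"
proof -
  have finite_W: "finite W"
    using W(1) fin finite_subset by blast
  have "card (\<Union>w\<in>W. cyclic_generators w) = (\<Sum>w\<in>W. card (cyclic_generators w))"
  proof (rule card_UN_disjoint[OF finite_W])
    show "\<forall>w\<in>W. finite (cyclic_generators w)"
      by (simp add: cyclic_generators_def)
    show "\<forall>v\<in>W. \<forall>w\<in>W. v \<noteq> w \<longrightarrow> cyclic_generators v \<inter> cyclic_generators w = {}"
    proof (intro ballI impI)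
      fix v w assume "v \<in> W" "w \<in> W" "v \<noteq> w"
      then have "generate G {v} \<noteq> generate G {w}"
        using inj_onD[OF inj] by blast
      then show "cyclic_generators v \<inter> cyclic_generators w = {}"
        using W(1) \<open>v \<in> W\<close> \<open>w \<in> W\<close> by (intro cyclic_generators_disjoint[OF fin]) auto
    qed
  qed
  also have "\<dots> = card W * totient n"
    using W by (simp add: card_cyclic_generators subset_iff)
  finally show ?thesis .
qed

lemma card_sol_set_ge_cyclic_subgroups:
  assumes fin: "finite (carrier G)" and g: "g \<in> carrier G" "ord g = n"
    and W: "W \<subseteq> carrier G" "\<And>w. w \<in> W \<Longrightarrow> ord w = n"
    and inj: "inj_on (\<lambda>w. generate G {w}) W"
    and ne: "\<And>w. w \<in> W \<Longrightarrow> generate G {w} \<noteq> generate G {g}"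
  shows "n + card W * totient n \<le> card (sol_set G n)"
proof -
  let ?U = "\<Union>w\<in>W. cyclic_generators w"
  have "card (generate G {g} \<union> ?U) = n + card W * totient n"
  proof (subst card_Un_disjoint)
    show "finite (generate G {g})"
      using fin g generate_incl[of "{g}"] finite_subset by blast
    show "finite ?U"
      using finite_subset[OF W(1) fin] by (simp add: cyclic_generators_def)
    show "generate G {g} \<inter> ?U = {}"
      using generate_inter_cyclic_generators[OF fin g(1)] W g(2) ne by blast
    show "card (generate G {g}) + card ?U = n + card W * totient n"
      using g card_UN_cyclic_generators[OF fin W inj] by (simp add: generate_pow_card)
  qed
  moreover have "generate G {g} \<union> ?U \<subseteq> sol_set G n"
  proof -
    have "cyclic_generators w \<subseteq> sol_set G n" if "w \<in> W" for w
      using W that by (intro cyclic_generators_subset_sol_set[OF fin]) auto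
    moreover have "generate G {g} \<subseteq> sol_set G n"
      using generate_singleton_subset_sol_set[OF fin g(1)] g(2) by simp
    ultimately show ?thesis
      by blast
  qed
  moreover have "finite (sol_set G n)"
    using fin by (simp add: sol_set_def)
  ultimately show ?thesis
    using card_mono by metis
qed

lemma conj_mem_generate_if_pow_conj_mem:
  assumes fin: "finite (carrier G)" and p: "Factorial_Ring.prime p"
    and g: "g \<in> carrier G" "ord g dvd p ^ k" and h: "h \<in> carrier G"
    and d: "0 < d" "d < p" and normal: "g [^] d \<otimes> h \<otimes> inv (g [^] d) \<in> generate G {h}"
  shows "g \<otimes> h \<otimes> inv g \<in> generate G {h}"
proof -
  have gd: "g [^] d \<in> carrier G"
    using g by simp
  obtain l :: nat where "g = (g [^] d) [^] l"
    using mem_generate_pow_if_less_prime[OF fin p g d] mem_generate_singleton_iff[OF fin gd] by blast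
  then show ?thesis
    using conj_mem_generate_pow[OF fin gd h normal, of l] by simp
qed

lemma generate_conj_pow_inj:
  assumes fin: "finite (carrier G)" and p: "Factorial_Ring.prime p"
    and g: "g \<in> carrier G" "ord g dvd p ^ k" and h: "h \<in> carrier G"
    and not_normal: "g \<otimes> h \<otimes> inv g \<notin> generate G {h}"
  shows "inj_on (\<lambda>i. generate G {g [^] i \<otimes> h \<otimes> inv (g [^] i)}) {..<p}"
proof -
  have False if ij: "i < j" "j < p"
    and eq: "generate G {g [^] i \<otimes> h \<otimes> inv (g [^] i)} = generate G {g [^] j \<otimes> h \<otimes> inv (g [^] j)}"
    for i j :: nat
  proof -
    define d where "d = j - i"
    have gi: "g [^] i \<in> carrier G" and gd: "g [^] d \<in> carrier G"
      using g by simp_all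
    have "g [^] j \<otimes> h \<otimes> inv (g [^] j) \<in> generate G {g [^] i \<otimes> h \<otimes> inv (g [^] i)}"
      unfolding eq using g h by (intro generate.incl) simp
    then obtain m :: nat where m: "g [^] j \<otimes> h \<otimes> inv (g [^] j) = (g [^] i \<otimes> h \<otimes> inv (g [^] i)) [^] m"
      using fin g h by (auto simp: mem_generate_singleton_iff)
    have "g [^] j = g [^] i \<otimes> g [^] d"
      using ij g by (simp add: d_def nat_pow_mult)
    then have "g [^] j \<otimes> h \<otimes> inv (g [^] j) = g [^] i \<otimes> (g [^] d \<otimes> h \<otimes> inv (g [^] d)) \<otimes> inv (g [^] i)"
      using g h by (simp add: m_assoc inv_mult_group)
    then have "g [^] i \<otimes> (g [^] d \<otimes> h \<otimes> inv (g [^] d)) \<otimes> inv (g [^] i) = g [^] i \<otimes> h [^] m \<otimes> inv (g [^] i)"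
      using m pow_conj[OF gi h] by simp
    then have "g [^] d \<otimes> h \<otimes> inv (g [^] d) = h [^] m"
      using gi gd h by (simp add: conj_eq_conj_iff)
    then have "g [^] d \<otimes> h \<otimes> inv (g [^] d) \<in> generate G {h}"
      using fin h by (auto simp: mem_generate_singleton_iff)
    moreover have "0 < d" "d < p"
      using ij by (simp_all add: d_def)
    ultimately show False
      using conj_mem_generate_if_pow_conj_mem[OF fin p g h] not_normal by blast
  qed
  then show ?thesis
    by (intro inj_onI) (metis lessThan_iff linorder_neqE_nat)
qed

lemma generate_conj_pow_ne:
  assumes fin: "finite (carrier G)" and g: "g \<in> carrier G" and h: "h \<in> carrier G" "h \<notin> generate G {g}"
  shows "generate G {g [^] (i::nat) \<otimes> h \<otimes> inv (g [^] i)} \<noteq> generate G {g}"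
proof
  assume eq: "generate G {g [^] i \<otimes> h \<otimes> inv (g [^] i)} = generate G {g}"
  have sub: "subgroup (generate G {g}) G"
    using g by (intro generate_is_subgroup) simp
  have "g [^] i \<in> generate G {g}"
    using fin g by (auto simp: mem_generate_singleton_iff)
  moreover have "g [^] i \<otimes> h \<otimes> inv (g [^] i) \<in> generate G {g}"
    unfolding eq[symmetric] using g h by (intro generate.incl) simp
  ultimately have "inv (g [^] i) \<otimes> (g [^] i \<otimes> h \<otimes> inv (g [^] i)) \<otimes> g [^] i \<in> generate G {g}"
    using sub by (simp add: subgroup.m_closed subgroup.m_inv_closed)
  moreover have "inv (g [^] i) \<otimes> (g [^] i \<otimes> h \<otimes> inv (g [^] i)) \<otimes> g [^] i = h"
    using g h by (simp add: m_assoc[symmetric]) (simp add: m_assoc)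
  ultimately show False
    using h(2) by simp
qed

lemma prime_mult_le_card_sol_set_non_normalizing:
  assumes fin: "finite (carrier G)" and p: "Factorial_Ring.prime p" and n: "n = p ^ k" "k > 0"
    and g: "g \<in> carrier G" "ord g = n" and h: "h \<in> carrier G" "ord h = n" "h \<notin> generate G {g}"
    and not_normal: "g \<otimes> h \<otimes> inv g \<notin> generate G {h}"
  shows "p * n \<le> card (sol_set G n)"
proof -
  define w where "w i = g [^] i \<otimes> h \<otimes> inv (g [^] i)" for i :: nat
  have "ord g dvd p ^ k"
    using g n by simp
  then have inj: "inj_on ((\<lambda>u. generate G {u}) \<circ> w) {..<p}"
    using generate_conj_pow_inj[OF fin p g(1) _ h(1) not_normal] by (simp add: w_def comp_def)
  have "n + card (w ` {..<p}) * totient n \<le> card (sol_set G n)"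
  proof (rule card_sol_set_ge_cyclic_subgroups[OF fin g])
    show "w ` {..<p} \<subseteq> carrier G" "\<And>u. u \<in> w ` {..<p} \<Longrightarrow> ord u = n"
      using g h by (auto simp: w_def ord_conj)
    show "inj_on (\<lambda>u. generate G {u}) (w ` {..<p})"
      using inj by (rule inj_on_imageI)
    show "\<And>u. u \<in> w ` {..<p} \<Longrightarrow> generate G {u} \<noteq> generate G {g}"
      using generate_conj_pow_ne[OF fin g(1) h(1,3)] by (auto simp: w_def)
  qed
  moreover have "card (w ` {..<p}) = p"
    using inj_on_imageI2[OF inj] by (simp add: card_image)
  moreover have "n + p * totient n = p * n"
  proof -
    have "p * p ^ (k - 1) = n"
      using n by (cases k) simp_all
    then have "p * totient n = n * (p - 1)"
      using totient_prime_power[OF p n(2)] n(1) by (simp add: mult.assoc[symmetric])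
    then show ?thesis
      using prime_gt_0_nat[OF p] by (simp add: algebra_simps)
  qed
  ultimately show ?thesis
    by simp
qed

lemma prime_mult_le_card_sol_set:
  assumes fin: "finite (carrier G)" and p: "Factorial_Ring.prime p" and n: "n = p ^ k" "k > 0"
    and g: "g \<in> carrier G" "ord g = n" and x: "x \<in> sol_set G n" "x \<notin> generate G {g}"
  shows "p * n \<le> card (sol_set G n)"
proof (cases "x \<otimes> g \<otimes> inv x \<in> generate G {g}")
  case True
  then show ?thesis
    using prime_mult_le_card_sol_set_normalizing[OF fin p n g x] by blast
next
  case False
  define h where "h = x \<otimes> g \<otimes> inv x"
  have xc: "x \<in> carrier G"
    using x(1) by (simp add: sol_set_def)
  have h: "h \<in> carrier G" "ord h = n" "h \<notin> generate G {g}"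
    using False xc g by (simp_all add: h_def ord_conj)
  show ?thesis
  proof (cases "g \<otimes> h \<otimes> inv g \<in> generate G {h}")
    case True
    have "g \<notin> generate G {h}"
    proof
      assume "g \<in> generate G {h}"
      then have "generate G {g} = generate G {h}"
        using generate_singleton_eq_if_ord_eq[OF fin g(1) h(1)] g(2) h(2) by simp
      then show False
        using h(3) generate.incl[of h "{h}" G] by simp
    qed
    moreover have "g \<in> sol_set G n"
      using g(1) by (simp add: sol_set_def flip: g(2))
    ultimately show ?thesis
      using prime_mult_le_card_sol_set_normalizing[OF fin p n h(1,2) _ _ True] by blast
  next
    case False
    then show ?thesis
      using prime_mult_le_card_sol_set_non_normalizing[OF fin p n g h] by blast
  qed
qed

lemma group_exp_dvd_order: "group_exp G dvd order G"
  unfolding group_exp_def by (auto intro: Lcm_least ord_dvd_group_order)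

lemma group_exp_pos:
  assumes "finite (carrier G)"
  shows "group_exp G > 0"
proof -
  have "0 \<notin> ord ` carrier G"
    using ord_ge_1[OF assms] by (metis image_iff not_one_le_zero)
  moreover have "finite (ord ` carrier G)"
    using assms by simp
  ultimately show ?thesis
    using Lcm_0_iff by (fastforce simp: group_exp_def)
qed

lemma exists_ord_eq_prime_power:
  assumes fin: "finite (carrier G)" and p: "Factorial_Ring.prime p" and dvd: "p ^ k dvd group_exp G"
  shows "\<exists>g\<in>carrier G. ord g = p ^ k"
proof (cases "k = 0")
  case True
  then show ?thesis
    by (intro bexI[of _ \<one>]) simp_all
next
  case False
  obtain a where a: "a \<in> carrier G" "p ^ k dvd ord a"
    using prime_power_dvd_Lcm_imp[of "ord ` carrier G" p k] fin p False dvd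
    by (auto simp: group_exp_def)
  then obtain r where r: "ord a = p ^ k * r"
    by (auto elim: dvdE)
  then have "r \<noteq> 0"
    using ord_ge_1[OF fin a(1)] by auto
  then have "ord (a [^] r) = p ^ k"
    using ord_pow[OF a(1), of r] r by simp
  then show ?thesis
    using a(1) by blast
qed

lemma frob_quot_one: "frob_quot G 1 = 1"
proof -
  have "sol_set G 1 = {\<one>}"
    by (auto simp: sol_set_def)
  then show ?thesis
    by (simp add: frob_quot_def)
qed

lemma frob_quot_prime_power_cases:
  assumes fin: "finite (carrier G)" and p: "Factorial_Ring.prime p" and dvd: "p ^ k dvd group_exp G"
  shows "frob_quot G (p ^ k) = 1 \<or> p \<le> frob_quot G (p ^ k)"
proof (cases "k = 0")
  case True
  then show ?thesis
    unfolding True power_0 frob_quot_one by simp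
next
  case False
  define n where "n = p ^ k"
  obtain g where g: "g \<in> carrier G" "ord g = n"
    using exists_ord_eq_prime_power[OF fin p dvd] n_def by blast
  have "n > 0"
    using p by (simp add: n_def prime_gt_0_nat)
  have gen: "generate G {g} \<subseteq> sol_set G n" "card (generate G {g}) = n"
    using generate_singleton_subset_sol_set[OF fin g(1)] g by (simp_all flip: generate_pow_card)
  show ?thesis
  proof (cases "sol_set G n \<subseteq> generate G {g}")
    case True
    then have "card (sol_set G n) = n"
      using gen by auto
    then show ?thesis
      using \<open>n > 0\<close> by (simp add: frob_quot_def n_def)
  next
    case False
    then obtain x where "x \<in> sol_set G n" "x \<notin> generate G {g}"
      by blast
    then have "p * n \<le> card (sol_set G n)"
      using prime_mult_le_card_sol_set[OF fin p n_def _ g] False \<open>k \<noteq> 0\<close> by simp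
    then have "p \<le> card (sol_set G n) div n"
      using \<open>n > 0\<close> by (simp add: less_eq_div_iff_mult_less_eq)
    then show ?thesis
      by (simp add: frob_quot_def n_def)
  qed
qed

lemma finite_F_pp:
  assumes "finite (carrier G)"
  shows "finite (F_pp G)"
proof -
  have "pp_divisors G \<subseteq> {..group_exp G}"
    using group_exp_pos[OF assms] by (auto simp: pp_divisors_def dest: dvd_imp_le)
  then show ?thesis
    unfolding F_pp_def by (meson finite_atMost finite_imageI finite_subset)
qed

lemma one_mem_F_pp: "1 \<in> F_pp G"
proof -
  have "\<exists>p k. Factorial_Ring.prime p \<and> (1::nat) = p ^ k"
    using two_is_prime_nat power_0 by metis
  then have "1 \<in> pp_divisors G"
    by (simp add: pp_divisors_def)
  then show ?thesis
    unfolding F_pp_def by (metis image_eqI frob_quot_one)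
qed

lemma F_pp_eq_one_or_ge:
  assumes "finite (carrier G)" and q: "\<And>p. Factorial_Ring.prime p \<Longrightarrow> p dvd order G \<Longrightarrow> q \<le> p"
    and "f \<in> F_pp G"
  shows "f = 1 \<or> q \<le> f"
proof -
  obtain p k where p: "Factorial_Ring.prime p" and dvd: "p ^ k dvd group_exp G"
    and f: "f = frob_quot G (p ^ k)"
    using assms(3) by (auto simp: F_pp_def pp_divisors_def)
  show ?thesis
  proof (cases "k = 0")
    case True
    then show ?thesis
      using f frob_quot_one by simp
  next
    case False
    then have "p dvd p ^ k"
      by (simp add: dvd_power)
    then have "p dvd order G"
      using dvd_trans[OF dvd_trans[OF _ dvd] group_exp_dvd_order] by blast
    then show ?thesis
      using frob_quot_prime_power_cases[OF assms(1) p dvd] q[OF p] f by auto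
  qed
qed

end

theorem corollary1p2:
  fixes G :: "('a, 'b) monoid_scheme" and q :: nat
  assumes "group G" and "finite (carrier G)" and "order G > 1"
    and "q = Min {p. Factorial_Ring.prime p \<and> p dvd order G}"
  shows "mf_pp G \<le> q \<longleftrightarrow> (F_pp G = {1} \<or> F_pp G = {1, q})"
proof -
  interpret group G by fact
  let ?P = "{p. Factorial_Ring.prime p \<and> p dvd order G}"
  have fin: "finite ?P"
    using assms(3) by (auto intro: finite_subset[of _ "{..order G}"] dest: dvd_imp_le)
  have "?P \<noteq> {}"
    using prime_factor_nat[of "order G"] assms(3) by auto
  then have "q \<in> ?P"
    using Min_in[OF fin] assms(4) by blast
  then have "1 < q"
    using prime_gt_1_nat by blast
  have q_le: "q \<le> p" if "Factorial_Ring.prime p" "p dvd order G" for p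
    using Min_le[OF fin] that assms(4) by simp
  show ?thesis
    unfolding mf_pp_def
    by (rule Max_le_gap_iff[OF finite_F_pp[OF assms(2)] one_mem_F_pp \<open>1 < q\<close>])
      (rule F_pp_eq_one_or_ge[OF assms(2) q_le])
qed

end
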